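(* Under assumption (A3), at any round $t$, for any fixed unit vector $\theta\in\mathbb R^d$ and for any arm $a_t\in\mathcal A_t$ selected by the agent (possibly depending on $\mathcal A_t$ and the history), $$\mathbb E_t\big[(\theta^\top x_{a_t})^2\,\big|\,|\mathcal A_t|\big]\ \ge\ \tilde\lambda_x:=\int_0^{\lambda_x}\Big(1-e^{-\frac{(\lambda_x-s)^2}{2\sigma^2}}\Big)^K\,ds,$$ where $K$ is an upper bound on $|\mathcal A_t|$ for all $t$.
   Context: Assumption (A3): at each round $t$ the arm set $\mathcal A_t$ has at most $K$ arms, and the feature vectors $x_a$, $a\in\mathcal A_t$, are drawn independently (of each other and of the past) from a fixed distribution $\rho$ on $\{x\in\mathbb R^d:\|x\|_2\le1\}$, with $\lambda_x:=\lambda_{\min}(\mathbb E_{x\sim\rho}[xx^\top])>0$; moreover for every fixed unit vector $z$ the centered variable $(z^\top x)^2-\mathbb E[(z^\top x)^2]$, $x\sim\rho$, is sub-Gaussian with variance proxy at most $\sigma^2$ (so that $\mathbb P((z^\top x)^2-\mathbb E[(z^\top x)^2]<-s)\le e^{-s^2/(2\sigma^2)}$ for $s>0$). $\mathbb E_t[\cdot]$ denotes conditional expectation given $(i_1,\mathcal A_1,r_1),\dots,(i_{t-1},\mathcal A_{t-1},r_{t-1}),i_t$. *)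

theory Defs
  imports "HOL-Probability.Probability"
begin

definition second_moment :: "(real^'d) measure \<Rightarrow> real^'d^'d" where
  "second_moment \<rho> = (\<chi> i j. \<integral>x. x $ i * x $ j \<partial>\<rho>)"

definition lambda_min :: "real^'n^'n \<Rightarrow> real" where
  "lambda_min A = Min {\<mu>. \<exists>v. v \<noteq> 0 \<and> A *v v = \<mu> *s v}"

definition subgaussian :: "'a measure \<Rightarrow> ('a \<Rightarrow> real) \<Rightarrow> real \<Rightarrow> bool" where
  "subgaussian M Y s2 \<longleftrightarrow> integrable M Y \<and>
     (\<forall>l::real. integrable M (\<lambda>\<omega>. exp (l * (Y \<omega> - integral\<^sup>L M Y))) \<and>
        (\<integral>\<omega>. exp (l * (Y \<omega> - integral\<^sup>L M Y)) \<partial>M) \<le> exp (l\<^sup>2 * s2 / 2))"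

end

theory Submission
  imports Defs
begin

text \<open>Let \<open>Y = (\<theta> \<bullet> x)\<^sup>2\<close> and \<open>\<lambda> = lambda_min \<Sigma>\<close>. By the layer-cake formula the expected
  selected value is the integral over levels \<open>s\<close> of the probability that it exceeds \<open>s\<close>; whatever
  the selection rule, it exceeds \<open>s\<close> as soon as all \<open>n \<le> K\<close> independent arms do, an event of
  probability \<open>P(Y > s)^n\<close>. For \<open>s \<le> \<lambda> \<le> \<theta>\<^sup>T \<Sigma> \<theta> = E Y\<close>, Chernoff's bound for the sub-Gaussian
  variable \<open>Y\<close> gives \<open>P(Y \<le> s) \<le> exp (-(\<lambda> - s)\<^sup>2 / (2 \<sigma>\<^sup>2))\<close>. The inequality \<open>\<lambda> \<le> \<theta>\<^sup>T \<Sigma> \<theta>\<close>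
  holds because a minimiser of a symmetric quadratic form on the unit sphere is an eigenvector.\<close>

lemma inner_matrix_vector_symmetric:
  fixes A :: "real^'n^'n"
  assumes "transpose A = A"
  shows "u \<bullet> (A *v v) = (A *v u) \<bullet> v"
  by (metis assms dot_lmul_matrix transpose_matrix_vector)

lemma psd_quadratic_form_eq_0_imp_kernel:
  fixes B :: "real^'n^'n"
  assumes sym: "transpose B = B" and psd: "\<And>w. 0 \<le> w \<bullet> (B *v w)"
    and zero: "v \<bullet> (B *v v) = 0"
  shows "B *v v = 0"
proof -
  define u where "u = B *v v"
  define c where "c = u \<bullet> (B *v u)"
  have vBu: "v \<bullet> (B *v u) = u \<bullet> u"
    using inner_matrix_vector_symmetric[OF sym] by (simp add: u_def)
  have expand: "(v + t *\<^sub>R u) \<bullet> (B *v (v + t *\<^sub>R u)) = t * (2 * (u \<bullet> u) + t * c)" for t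
  proof -
    have "(v + t *\<^sub>R u) \<bullet> (B *v (v + t *\<^sub>R u))
        = v \<bullet> (B *v v) + t * (v \<bullet> (B *v u)) + t * (u \<bullet> (B *v v)) + t\<^sup>2 * c"
      by (simp add: c_def matrix_vector_right_distrib matrix_vector_mult_scaleR
          inner_add_left inner_add_right power2_eq_square algebra_simps)
    then show ?thesis
      using zero vBu by (simp add: u_def[symmetric] power2_eq_square algebra_simps)
  qed
  have "u \<bullet> u = 0"
  proof (rule ccontr)
    assume "u \<bullet> u \<noteq> 0"
    then have uu: "u \<bullet> u > 0" by simp
    have c0: "c \<ge> 0" using psd by (simp add: c_def)
    define t where "t = - (u \<bullet> u) / (c + 1)"
    have "t < 0" using uu c0 by (simp add: t_def divide_neg_pos)
    moreover have "2 * (u \<bullet> u) + t * c > 0"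
    proof -
      have "0 < c * (u \<bullet> u) + u \<bullet> u * 2" using uu c0 by (intro add_nonneg_pos) simp_all
      then show ?thesis using c0 by (simp add: t_def field_simps)
    qed
    ultimately have "t * (2 * (u \<bullet> u) + t * c) < 0" by (simp add: mult_neg_pos)
    then show False using psd expand by (metis not_le)
  qed
  then show ?thesis by (simp add: u_def)
qed

lemma quadratic_form_min_eigenvector:
  fixes A :: "real^'n^'n"
  assumes sym: "transpose A = A"
  obtains m v where "v \<noteq> 0" "A *v v = m *s v" "\<And>w. m * (w \<bullet> w) \<le> w \<bullet> (A *v w)"
proof -
  define q where "q w = w \<bullet> (A *v w)" for w :: "real^'n"
  have "continuous_on (sphere 0 1) q" unfolding q_def
    by (intro continuous_intros linear_continuous_on bounded_linear_intros)
       (simp add: matrix_vector_mul_linear linear_conv_bounded_linear[symmetric])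
  then obtain v where v: "v \<in> sphere 0 1" and v_min: "\<And>w. w \<in> sphere 0 1 \<Longrightarrow> q v \<le> q w"
    using continuous_attains_inf[OF compact_sphere, of 0 1 q] by auto
  define m where "m = q v"
  have lower: "m * (w \<bullet> w) \<le> q w" for w
  proof (cases "w = 0")
    case False
    then have nw: "norm w > 0" by simp
    have "m \<le> q (inverse (norm w) *\<^sub>R w)" using nw v_min m_def by (simp add: norm_scaleR)
    also have "\<dots> = (inverse (norm w))\<^sup>2 * q w"
      by (simp add: q_def matrix_vector_mult_scaleR power2_eq_square algebra_simps)
    finally have "m * (norm w)\<^sup>2 \<le> q w" using nw by (simp add: field_simps power2_eq_square)
    then show ?thesis by (simp add: power2_norm_eq_inner)
  qed (simp add: q_def)
  define B where "B = A - m *\<^sub>R mat 1"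
  have B_apply: "B *v w = A *v w - m *\<^sub>R w" for w
    by (simp add: B_def matrix_vector_mult_diff_rdistrib scaleR_matrix_vector_assoc[symmetric])
  have "B *v v = 0"
  proof (rule psd_quadratic_form_eq_0_imp_kernel)
    show "transpose B = B"
      using sym unfolding B_def transpose_def by (simp add: vec_eq_iff mat_def)
    show "0 \<le> w \<bullet> (B *v w)" for w using lower[of w] by (simp add: B_apply inner_diff_right q_def)
    show "v \<bullet> (B *v v) = 0"
      using v by (simp add: B_apply inner_diff_right q_def m_def dot_square_norm)
  qed
  then have "A *v v = m *s v" by (simp add: B_apply scalar_mult_eq_scaleR)
  moreover have "v \<noteq> 0" using v by auto
  ultimately show ?thesis using that lower by (simp add: q_def)
qed

lemma finite_eigenvalues_symmetric:
  fixes A :: "real^'n^'n"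
  assumes sym: "transpose A = A"
  shows "finite {\<mu>. \<exists>v. v \<noteq> 0 \<and> A *v v = \<mu> *s v}"
proof -
  define S where "S = {\<mu>. \<exists>v. v \<noteq> 0 \<and> A *v v = \<mu> *s v}"
  have "\<forall>\<mu>\<in>S. \<exists>v. v \<noteq> 0 \<and> A *v v = \<mu> *s v" by (simp add: S_def)
  then obtain e where e: "\<And>\<mu>. \<mu> \<in> S \<Longrightarrow> e \<mu> \<noteq> 0 \<and> A *v e \<mu> = \<mu> *s e \<mu>"
    by metis
  have inj: "inj_on e S"
  proof (rule inj_onI)
    fix x y assume "x \<in> S" "y \<in> S" "e x = e y"
    then have "x *s e x = y *s e x" "e x \<noteq> 0" using e by metis+
    then show "x = y" by (simp add: scalar_mult_eq_scaleR)
  qed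
  have "orthogonal (e x) (e y)" if "x \<in> S" "y \<in> S" "x \<noteq> y" for x y
  proof -
    have "e x \<bullet> (A *v e y) = (A *v e x) \<bullet> e y" by (rule inner_matrix_vector_symmetric[OF sym])
    then have "y * (e x \<bullet> e y) = x * (e x \<bullet> e y)" using e that by (simp add: scalar_mult_eq_scaleR)
    then show ?thesis using that by (simp add: orthogonal_def)
  qed
  then have "pairwise orthogonal (e ` S)"
    unfolding pairwise_def by (metis image_iff)
  moreover have "0 \<notin> e ` S" using e by auto
  ultimately have "independent (e ` S)" by (simp add: pairwise_orthogonal_independent)
  then have "finite (e ` S)" using independent_bound by blast
  then show ?thesis using inj finite_imageD S_def by blast
qed

lemma lambda_min_le_quadratic_form:
  fixes A :: "real^'n^'n"
  assumes sym: "transpose A = A" and unit: "norm \<theta> = 1"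
  shows "lambda_min A \<le> \<theta> \<bullet> (A *v \<theta>)"
proof -
  obtain m v where v: "v \<noteq> 0" "A *v v = m *s v" and lower: "\<And>w. m * (w \<bullet> w) \<le> w \<bullet> (A *v w)"
    using quadratic_form_min_eigenvector[OF sym] by blast
  have "m \<le> \<mu>" if "v' \<noteq> 0" "A *v v' = \<mu> *s v'" for \<mu> v'
  proof -
    have "m * (v' \<bullet> v') \<le> \<mu> * (v' \<bullet> v')"
      using lower[of v'] that(2) by (simp add: scalar_mult_eq_scaleR)
    then show ?thesis using that(1) by simp
  qed
  then have "lambda_min A = m"
    unfolding lambda_min_def using v finite_eigenvalues_symmetric[OF sym] by (intro Min_eqI) auto
  then show ?thesis using lower[of \<theta>] unit by (simp add: dot_square_norm)
qed

text \<open>Chernoff's bound: Markov's inequality applied to \<open>exp (- l * (Y - E Y))\<close> with the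
  optimal \<open>l = (E Y - s) / s2\<close>.\<close>

lemma subgaussian_lower_tail:
  fixes M :: "'a measure" and Y :: "'a \<Rightarrow> real"
  assumes "prob_space M" and sg: "subgaussian M Y s2" and "0 \<le> s2"
    and a: "0 \<le> a" "a \<le> integral\<^sup>L M Y - s"
  shows "measure M {x\<in>space M. Y x \<le> s} \<le> exp (- (a\<^sup>2 / (2 * s2)))"
proof (cases "s2 = 0")
  case False
  interpret prob_space M by fact
  have s2: "s2 > 0" using False \<open>0 \<le> s2\<close> by simp
  define \<mu> where "\<mu> = integral\<^sup>L M Y"
  define t where "t = \<mu> - s"
  define l where "l = t / s2"
  have "a \<le> t" using a by (simp add: t_def \<mu>_def)
  then have "0 \<le> l" using a s2 by (simp add: l_def)
  define u where "u x = exp ((-l) * (Y x - \<mu>))" for x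
  have u_int: "integrable M u" and u_bound: "integral\<^sup>L M u \<le> exp ((-l)\<^sup>2 * s2 / 2)"
    using sg unfolding subgaussian_def u_def \<mu>_def by blast+
  have u_meas: "u \<in> borel_measurable M" using u_int by (rule borel_measurable_integrable)
  define c where "c = exp (l * t)"
  have "{x\<in>space M. Y x \<le> s} \<subseteq> {x\<in>space M. c \<le> u x}"
  proof safe
    fix x assume "x \<in> space M" "Y x \<le> s"
    then have "l * t \<le> (-l) * (Y x - \<mu>)" using \<open>0 \<le> l\<close> unfolding t_def
      by (simp add: mult_left_mono algebra_simps)
    then show "c \<le> u x" by (simp add: c_def u_def)
  qed
  then have "measure M {x\<in>space M. Y x \<le> s} \<le> measure M {x\<in>space M. c \<le> u x}"
    by (rule finite_measure_mono) (use u_meas in measurable)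
  also have "\<dots> \<le> integral\<^sup>L M u / c"
    by (rule integral_Markov_inequality_measure[OF u_int, of "space M"]) (auto simp: c_def u_def)
  also have "\<dots> \<le> exp ((-l)\<^sup>2 * s2 / 2) / c"
    by (rule divide_right_mono[OF u_bound]) (simp add: c_def)
  also have "\<dots> = exp ((-l)\<^sup>2 * s2 / 2 - l * t)" by (simp add: c_def exp_diff)
  also have "(-l)\<^sup>2 * s2 / 2 - l * t = - (t\<^sup>2 / (2 * s2))"
    using s2 by (simp add: l_def power2_eq_square field_simps)
  also have "exp (- (t\<^sup>2 / (2 * s2))) \<le> exp (- (a\<^sup>2 / (2 * s2)))"
    using \<open>a \<le> t\<close> a s2 by (simp add: divide_right_mono power_mono)
  finally show ?thesis .
qed (use prob_space.prob_le_1[OF assms(1)] in simp)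

lemma subgaussian_upper_tail:
  fixes M :: "'a measure" and Y :: "'a \<Rightarrow> real"
  assumes "prob_space M" and sg: "subgaussian M Y s2" and "0 \<le> s2"
    and "0 \<le> a" and "a \<le> integral\<^sup>L M Y - s"
  shows "1 - exp (- (a\<^sup>2 / (2 * s2))) \<le> measure M {x\<in>space M. s < Y x}"
proof -
  interpret prob_space M by fact
  have "Y \<in> borel_measurable M"
    using sg unfolding subgaussian_def by (blast intro: borel_measurable_integrable)
  moreover have "{x\<in>space M. s < Y x} = space M - {x\<in>space M. Y x \<le> s}" by auto
  ultimately show ?thesis
    using subgaussian_lower_tail[OF assms] by (simp add: prob_compl)
qed

lemma transpose_second_moment: "transpose (second_moment \<rho>) = second_moment \<rho>"
  by (simp add: second_moment_def transpose_def vec_eq_iff mult.commute)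

lemma integrable_second_moment_entry:
  fixes \<rho> :: "(real^'d) measure"
  assumes "finite_measure \<rho>" and "sets \<rho> = sets borel" and "AE x in \<rho>. norm x \<le> 1"
  shows "integrable \<rho> (\<lambda>x. x $ i * x $ j)"
proof (rule finite_measure.integrable_const_bound[where B=1, OF assms(1)])
  show "AE x in \<rho>. norm (x $ i * x $ j) \<le> 1"
    using assms(3)
  proof eventually_elim
    case (elim x)
    have "\<bar>x $ i\<bar> \<le> 1" "\<bar>x $ j\<bar> \<le> 1"
      using component_le_norm_cart[of x i] component_le_norm_cart[of x j] elim by linarith+
    then show ?case by (simp add: abs_mult mult_le_one)
  qed
  have "(\<lambda>x::real^'d. x $ i * x $ j) \<in> borel_measurable borel"
    by (simp add: borel_measurable_continuous_onI continuous_intros)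
  then show "(\<lambda>x. x $ i * x $ j) \<in> borel_measurable \<rho>"
    using measurable_cong_sets[OF assms(2) refl] by blast
qed

lemma quadratic_form_second_moment:
  fixes \<rho> :: "(real^'d) measure"
  assumes "\<And>i j. integrable \<rho> (\<lambda>x. x $ i * x $ j)"
  shows "\<theta> \<bullet> (second_moment \<rho> *v \<theta>) = (\<integral>x. (\<theta> \<bullet> x)\<^sup>2 \<partial>\<rho>)"
proof -
  have "\<theta> \<bullet> (second_moment \<rho> *v \<theta>)
      = (\<Sum>i\<in>UNIV. \<Sum>j\<in>UNIV. \<theta> $ i * \<theta> $ j * (\<integral>x. x $ i * x $ j \<partial>\<rho>))"
    by (simp add: inner_vec_def matrix_vector_mult_def second_moment_def sum_distrib_left mult_ac)
  also have "\<dots> = (\<integral>x. (\<Sum>i\<in>UNIV. \<Sum>j\<in>UNIV. \<theta> $ i * \<theta> $ j * (x $ i * x $ j)) \<partial>\<rho>)"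
    using assms by (simp add: integral_sum integrable_sum)
  also have "\<dots> = (\<integral>x. (\<theta> \<bullet> x)\<^sup>2 \<partial>\<rho>)"
    by (rule Bochner_Integration.integral_cong)
       (simp_all add: inner_vec_def power2_eq_square sum_product mult.assoc mult.left_commute)
  finally show ?thesis .
qed

lemma lambda_min_second_moment_le:
  fixes \<rho> :: "(real^'d) measure"
  assumes "prob_space \<rho>" and "sets \<rho> = sets borel" and "AE x in \<rho>. norm x \<le> 1"
    and "norm \<theta> = 1"
  shows "lambda_min (second_moment \<rho>) \<le> (\<integral>x. (\<theta> \<bullet> x)\<^sup>2 \<partial>\<rho>)"
proof -
  have "finite_measure \<rho>" using assms(1) by (rule prob_space.finite_measure)
  then have "\<theta> \<bullet> (second_moment \<rho> *v \<theta>) = (\<integral>x. (\<theta> \<bullet> x)\<^sup>2 \<partial>\<rho>)"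
    using assms(2,3) by (intro quadratic_form_second_moment integrable_second_moment_entry)
  then show ?thesis
    using lambda_min_le_quadratic_form[OF transpose_second_moment[of \<rho>] assms(4)] by simp
qed

lemma inner_square_le_1:
  fixes \<theta> x :: "'a::real_inner"
  assumes "norm \<theta> = 1" and "norm x \<le> 1"
  shows "(\<theta> \<bullet> x)\<^sup>2 \<le> 1"
proof -
  have "\<bar>\<theta> \<bullet> x\<bar> \<le> 1" using Cauchy_Schwarz_ineq2[of \<theta> x] assms by simp
  then show ?thesis by (simp add: abs_square_le_1)
qed

lemma emeasure_PiM_all_coordinates_greater:
  fixes \<rho> :: "'a measure" and Y :: "'a \<Rightarrow> real"
  assumes "prob_space \<rho>" and Y_meas[measurable]: "Y \<in> borel_measurable \<rho>"
  shows "emeasure (PiM {..<n} (\<lambda>_. \<rho>)) {xs \<in> space (PiM {..<n} (\<lambda>_. \<rho>)). \<forall>i<n. s < Y (xs i)}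
       = ennreal (measure \<rho> {x\<in>space \<rho>. s < Y x} ^ n)"
proof -
  interpret rho: prob_space \<rho> by fact
  interpret product_sigma_finite "\<lambda>_::nat. \<rho>"
    by (simp add: product_sigma_finite_def rho.sigma_finite_measure_axioms)
  have A: "{x\<in>space \<rho>. s < Y x} \<in> sets \<rho>" by measurable
  have "{xs \<in> space (PiM {..<n} (\<lambda>_. \<rho>)). \<forall>i<n. s < Y (xs i)}
      = PiE {..<n} (\<lambda>_. {x\<in>space \<rho>. s < Y x})"
    by (auto simp: space_PiM PiE_def Pi_def)
  then show ?thesis
    using A by (simp add: emeasure_PiM rho.emeasure_eq_measure ennreal_power)
qed

lemma measurable_PiM_component_comp:
  fixes \<rho> :: "'a measure" and Y :: "'a \<Rightarrow> real"
  assumes "Y \<in> borel_measurable \<rho>" and "i < n"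
  shows "(\<lambda>xs. Y (xs i)) \<in> borel_measurable (PiM {..<n} (\<lambda>_. \<rho>))"
  using assms by (intro measurable_compose[OF measurable_component_singleton]) auto

lemma measurable_selected_coordinate:
  fixes \<rho> :: "'a measure" and Y :: "'a \<Rightarrow> real" and sel :: "(nat \<Rightarrow> 'a) \<Rightarrow> nat" and n :: nat
  defines "M \<equiv> PiM {..<n} (\<lambda>_. \<rho>)"
  assumes Y_meas: "Y \<in> borel_measurable \<rho>"
    and sel_meas: "sel \<in> measurable M (count_space UNIV)"
    and sel_range: "\<And>xs. xs \<in> space M \<Longrightarrow> sel xs < n"
  shows "(\<lambda>xs. Y (xs (sel xs))) \<in> borel_measurable M"
proof -
  have "(\<lambda>xs. Y (xs i)) \<in> borel_measurable M" if "i \<in> {..<n}" for i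
    unfolding M_def using that Y_meas by (simp add: measurable_PiM_component_comp)
  moreover have "sel \<in> measurable M (count_space {..<n})"
    using sel_meas sel_range unfolding measurable_count_space_eq2_countable by auto
  ultimately show ?thesis by (rule measurable_compose_countable'[where I="{..<n}"]) auto
qed

lemma nn_integral_selected_ge_tail_power:
  fixes \<rho> :: "'a measure" and Y :: "'a \<Rightarrow> real" and sel :: "(nat \<Rightarrow> 'a) \<Rightarrow> nat"
    and n :: nat and f :: "real \<Rightarrow> real"
  defines "M \<equiv> PiM {..<n} (\<lambda>_. \<rho>)"
  assumes rho: "prob_space \<rho>" and Y_meas: "Y \<in> borel_measurable \<rho>" and Y_nonneg: "\<And>x. 0 \<le> Y x"
    and sel_range: "\<And>xs. xs \<in> space M \<Longrightarrow> sel xs < n"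
    and f_int: "f integrable_on {0..c}" and f_nonneg: "\<And>s. s \<in> {0..c} \<Longrightarrow> 0 \<le> f s"
    and f_le: "\<And>s. s \<in> {0..c} \<Longrightarrow> f s \<le> measure \<rho> {x\<in>space \<rho>. s < Y x} ^ n"
  shows "ennreal (integral {0..c} f) \<le> (\<integral>\<^sup>+xs. ennreal (Y (xs (sel xs))) \<partial>M)"
proof -
  interpret M: prob_space M unfolding M_def by (intro prob_space_PiM rho)
  interpret pair_sigma_finite M lborel
    by (intro pair_sigma_finite.intro M.sigma_finite_measure_axioms lborel.sigma_finite_measure_axioms)
  define A where "A s = {xs\<in>space M. \<forall>i<n. s < Y (xs i)}" for s
  have A_meas: "A s \<in> sets M" for s
  proof -
    have [measurable]: "(\<lambda>xs. Y (xs i)) \<in> borel_measurable M" if "i < n" for i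
      unfolding M_def using that
      by (intro measurable_compose[OF measurable_component_singleton[where M="\<lambda>_. \<rho>"] Y_meas]) auto
    show ?thesis unfolding A_def by measurable
  qed
  define S where "S = {z \<in> space (M \<Otimes>\<^sub>M lborel). fst z \<in> A (snd z) \<and> snd z \<in> {0..c}}"
  have S_meas: "S \<in> sets (M \<Otimes>\<^sub>M lborel)"
  proof -
    have [measurable]: "(\<lambda>xs. Y (xs i)) \<in> borel_measurable M" if "i < n" for i
      unfolding M_def using that
      by (intro measurable_compose[OF measurable_component_singleton[where M="\<lambda>_. \<rho>"] Y_meas]) auto
    have "Measurable.pred (M \<Otimes>\<^sub>M lborel) (\<lambda>z. \<forall>i\<in>{..<n}. snd z < Y (fst z i))"
      by (intro pred_intros_finite) auto
    then show ?thesis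
      unfolding S_def A_def by (simp add: space_pair_measure lessThan_iff) measurable
  qed
  have "ennreal (integral {0..c} f) = (\<integral>\<^sup>+ s. ennreal (f s) * indicator {0..c} s \<partial>lborel)"
    using f_nonneg
    by (intro nn_integral_has_integral_lebesgue'[symmetric] integrable_integral[OF f_int]) auto
  also have "\<dots> \<le> (\<integral>\<^sup>+ s. emeasure M (A s) * indicator {0..c} s \<partial>lborel)"
    using f_le by (intro nn_integral_mono)
      (auto simp: indicator_def A_def M_def emeasure_PiM_all_coordinates_greater[OF rho Y_meas]
        intro!: ennreal_leI)
  also have "\<dots> = (\<integral>\<^sup>+ s. (\<integral>\<^sup>+ xs. indicator S (xs, s) \<partial>M) \<partial>lborel)"
  proof (rule nn_integral_cong)
    fix s :: real
    have "(\<integral>\<^sup>+ xs. indicator S (xs, s) \<partial>M) = (\<integral>\<^sup>+ xs. indicator (A s) xs * indicator {0..c} s \<partial>M)"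
      by (rule nn_integral_cong) (auto simp: S_def A_def indicator_def space_pair_measure)
    then show "emeasure M (A s) * indicator {0..c} s = (\<integral>\<^sup>+ xs. indicator S (xs, s) \<partial>M)"
      using A_meas by (simp add: nn_integral_multc)
  qed
  also have "\<dots> = (\<integral>\<^sup>+ xs. (\<integral>\<^sup>+ s. indicator S (xs, s) \<partial>lborel) \<partial>M)"
    using S_meas by (intro Fubini') simp_all
  also have "\<dots> \<le> (\<integral>\<^sup>+ xs. (\<integral>\<^sup>+ s. indicator {0..Y (xs (sel xs))} s \<partial>lborel) \<partial>M)"
    using sel_range
    by (intro nn_integral_mono) (auto simp: S_def A_def indicator_def space_pair_measure less_imp_le)
  also have "\<dots> = (\<integral>\<^sup>+xs. ennreal (Y (xs (sel xs))) \<partial>M)"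
    using Y_nonneg by simp
  finally show ?thesis .
qed

lemma integral_selected_ge_tail_power:
  fixes \<rho> :: "'a measure" and Y :: "'a \<Rightarrow> real" and sel :: "(nat \<Rightarrow> 'a) \<Rightarrow> nat"
    and n :: nat and f :: "real \<Rightarrow> real"
  defines "M \<equiv> PiM {..<n} (\<lambda>_. \<rho>)"
  assumes rho: "prob_space \<rho>" and Y_meas: "Y \<in> borel_measurable \<rho>" and Y_nonneg: "\<And>x. 0 \<le> Y x"
    and Y_bounded: "AE x in \<rho>. Y x \<le> B"
    and sel_meas: "sel \<in> measurable M (count_space UNIV)"
    and sel_range: "\<And>xs. xs \<in> space M \<Longrightarrow> sel xs < n"
    and f_int: "f integrable_on {0..c}" and f_nonneg: "\<And>s. s \<in> {0..c} \<Longrightarrow> 0 \<le> f s"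
    and f_le: "\<And>s. s \<in> {0..c} \<Longrightarrow> f s \<le> measure \<rho> {x\<in>space \<rho>. s < Y x} ^ n"
  shows "integral {0..c} f \<le> (\<integral>xs. Y (xs (sel xs)) \<partial>M)"
proof -
  interpret M: prob_space M unfolding M_def by (intro prob_space_PiM rho)
  have "AE xs in M. \<forall>i\<in>{..<n}. Y (xs i) \<le> B"
    unfolding M_def by (intro AE_finite_allI AE_PiM_component[OF rho] Y_bounded) auto
  then have "AE xs in M. norm (Y (xs (sel xs))) \<le> B"
  proof (rule AE_mp[OF _ AE_I2], intro impI)
    fix xs assume "xs \<in> space M" "\<forall>i\<in>{..<n}. Y (xs i) \<le> B"
    then show "norm (Y (xs (sel xs))) \<le> B" using sel_range Y_nonneg by simp
  qed
  then have int: "integrable M (\<lambda>xs. Y (xs (sel xs)))"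
    using measurable_selected_coordinate[OF Y_meas sel_meas[unfolded M_def] sel_range[unfolded M_def]]
    by (intro M.integrable_const_bound) (auto simp: M_def)
  have "ennreal (integral {0..c} f) \<le> (\<integral>\<^sup>+xs. ennreal (Y (xs (sel xs))) \<partial>M)"
    unfolding M_def using sel_range[unfolded M_def]
    by (rule nn_integral_selected_ge_tail_power[OF rho Y_meas Y_nonneg _ f_int f_nonneg f_le])
  also have "\<dots> = ennreal (\<integral>xs. Y (xs (sel xs)) \<partial>M)"
    using int Y_nonneg by (intro nn_integral_eq_integral) auto
  finally show ?thesis
    using Y_nonneg by (simp add: ennreal_le_iff integral_nonneg)
qed

theorem mainTheorem6:
  fixes \<rho> :: "(real^'d) measure" and \<sigma> :: real and K n :: nat
    and \<theta> :: "real^'d" and sel :: "(nat \<Rightarrow> real^'d) \<Rightarrow> nat"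
  assumes rho_prob: "prob_space \<rho>"
    and rho_sets: "sets \<rho> = sets borel"
    and rho_ball: "AE x in \<rho>. norm x \<le> 1"
    and lam_pos: "lambda_min (second_moment \<rho>) > 0"
    and subg: "\<And>z. norm z = 1 \<Longrightarrow> subgaussian \<rho> (\<lambda>x. (z \<bullet> x)\<^sup>2) (\<sigma>\<^sup>2)"
    and n_pos: "1 \<le> n" and n_le_K: "n \<le> K"
    and theta_unit: "norm \<theta> = 1"
    and sel_meas: "sel \<in> measurable (PiM {..<n} (\<lambda>_. \<rho>)) (count_space UNIV)"
    and sel_range: "\<And>xs. xs \<in> space (PiM {..<n} (\<lambda>_. \<rho>)) \<Longrightarrow> sel xs < n"
  shows "(\<integral>xs. (\<theta> \<bullet> xs (sel xs))\<^sup>2 \<partial>(PiM {..<n} (\<lambda>_. \<rho>)))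
      \<ge> integral {0..lambda_min (second_moment \<rho>)}
           (\<lambda>s. (1 - exp (- ((lambda_min (second_moment \<rho>) - s)\<^sup>2 / (2 * \<sigma>\<^sup>2)))) ^ K)"
proof -
  define lam where "lam = lambda_min (second_moment \<rho>)"
  define Y where "Y = (\<lambda>x::real^'d. (\<theta> \<bullet> x)\<^sup>2)"
  define e where "e s = exp (- ((lam - s)\<^sup>2 / (2 * \<sigma>\<^sup>2)))" for s
  have "Y \<in> borel_measurable borel"
    by (simp add: Y_def borel_measurable_continuous_onI continuous_intros)
  then have Y_meas: "Y \<in> borel_measurable \<rho>"
    using measurable_cong_sets[OF rho_sets refl] by blast
  have lam_le: "lam \<le> integral\<^sup>L \<rho> Y"
    unfolding lam_def Y_def by (rule lambda_min_second_moment_le[OF rho_prob rho_sets rho_ball theta_unit])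
  have Y_bounded: "AE x in \<rho>. Y x \<le> 1"
    using rho_ball by eventually_elim (simp add: Y_def inner_square_le_1 theta_unit)
  have tail: "(1 - e s) ^ K \<le> measure \<rho> {x\<in>space \<rho>. s < Y x} ^ n" if "s \<in> {0..lam}" for s
  proof -
    have "1 - e s \<le> measure \<rho> {x\<in>space \<rho>. s < Y x}"
      unfolding e_def using that lam_le
      by (intro subgaussian_upper_tail[OF rho_prob subg[OF theta_unit, folded Y_def]]) auto
    moreover have "0 \<le> 1 - e s" "1 - e s \<le> 1" by (simp_all add: e_def)
    ultimately show ?thesis
      by (meson order_trans power_decreasing[OF n_le_K] power_mono)
  qed
  have "integral {0..lam} (\<lambda>s. (1 - e s) ^ K) \<le> (\<integral>xs. Y (xs (sel xs)) \<partial>PiM {..<n} (\<lambda>_. \<rho>))"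
  proof (rule integral_selected_ge_tail_power[OF rho_prob Y_meas _ Y_bounded sel_meas sel_range])
    show "(\<lambda>s. (1 - e s) ^ K) integrable_on {0..lam}"
      unfolding e_def divide_inverse by (intro integrable_continuous_interval continuous_intros)
  qed (use tail in \<open>auto simp: Y_def e_def\<close>)
  then show ?thesis by (simp add: lam_def e_def Y_def)
qed

end
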